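(* Let $G$ be a finite simple graph, let $t<0$ and $k>0$ be integers, and write $k=i-mt$ with integers $m\ge 0$ and $1\le i\le -t$. Consider the following procedure: set $H:=G$; for $j=0,1,\ldots,m$ (in this order), let $H$ be replaced by the subgraph of $H$ induced by those vertices whose degree in the current graph $H$ is at least $i-jt$ (i.e., all vertices of degree smaller than $i-jt$ in $H$ are deleted simultaneously); output the final $H$. Let $G_0\ge G_1\ge G_2\ge\cdots$ be the maximal D-chain of order $t$ of $G$ (with $G_r=\emptyset$ for $r$ larger than its length). Then the output $H$ equals $G_k$.
   Context: All graphs are finite, without loops or multiple edges. For graphs $H,G$ write $H\le G$ if $H$ is a subgraph of $G$, and $H<G$ if $H\le G$ and $H\ne G$. Let $t$ be an integer. A D-chain of order $t$ of $G$ is a chain $L\colon G_0\ge G_1\ge\cdots\ge G_k$ of nonempty subgraphs of $G$ with $G_0=G$, where $G_i$ is a vertex-induced subgraph of $G_{i-1}$ for $1\le i\le k$, such that for every $0\le i\le k$, every vertex $v$ of $G_i$ has at least $i$ neighbors in $G_j$, where $j=\max\{0,i+t\}$. The number $k$ is the length of the chain. A D-chain $L\colon G_0\ge\cdots\ge G_k$ of order $t$ is maximal if (i) there is no D-chain of order $t$ of $G$ of length greater than $k$, and (ii) there is no D-chain $L'\colon G'_0\ge\cdots\ge G'_k$ of order $t$ of $G$ with $G_i<G'_i$ for some $1\le i\le k$. For $t\le 0$ the maximal D-chain of order $t$ exists and is unique. *)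

theory Defs
  imports Main
begin

text \<open>A finite simple graph: finite vertex set V, symmetric irreflexive edge
relation E on V. All D-chain members are induced subgraphs of G, so they are
represented by their vertex sets.\<close>

definition simple_graph :: "'a set \<Rightarrow> ('a \<Rightarrow> 'a \<Rightarrow> bool) \<Rightarrow> bool" where
  "simple_graph V E \<longleftrightarrow> finite V \<and> (\<forall>u v. E u v \<longrightarrow> u \<in> V \<and> v \<in> V)
     \<and> (\<forall>u v. E u v \<longrightarrow> E v u) \<and> (\<forall>v. \<not> E v v)"

definition nbrs :: "('a \<Rightarrow> 'a \<Rightarrow> bool) \<Rightarrow> 'a set \<Rightarrow> 'a \<Rightarrow> 'a set" where
  "nbrs E S v = {u \<in> S. E v u}"

definition D_chain :: "'a set \<Rightarrow> ('a \<Rightarrow> 'a \<Rightarrow> bool) \<Rightarrow> int \<Rightarrow> (nat \<Rightarrow> 'a set) \<Rightarrow> nat \<Rightarrow> bool" where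
  "D_chain V E t C len \<longleftrightarrow>
     C 0 = V \<and> (\<forall>r \<le> len. C r \<noteq> {})
     \<and> (\<forall>r. 1 \<le> r \<and> r \<le> len \<longrightarrow> C r \<subseteq> C (r - 1))
     \<and> (\<forall>r > len. C r = {})
     \<and> (\<forall>r \<le> len. \<forall>v \<in> C r. r \<le> card (nbrs E (C (nat (max 0 (int r + t)))) v))"

definition maximal_D_chain :: "'a set \<Rightarrow> ('a \<Rightarrow> 'a \<Rightarrow> bool) \<Rightarrow> int \<Rightarrow> (nat \<Rightarrow> 'a set) \<Rightarrow> nat \<Rightarrow> bool" where
  "maximal_D_chain V E t C len \<longleftrightarrow>
     D_chain V E t C len
     \<and> (\<forall>C' len'. D_chain V E t C' len' \<longrightarrow> len' \<le> len)
     \<and> \<not> (\<exists>C'. D_chain V E t C' len \<and> (\<exists>r. 1 \<le> r \<and> r \<le> len \<and> C r \<subset> C' r))"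

definition prune :: "('a \<Rightarrow> 'a \<Rightarrow> bool) \<Rightarrow> 'a set \<Rightarrow> int \<Rightarrow> 'a set" where
  "prune E H d = {v \<in> H. d \<le> int (card (nbrs E H v))}"

fun prune_steps :: "'a set \<Rightarrow> ('a \<Rightarrow> 'a \<Rightarrow> bool) \<Rightarrow> int \<Rightarrow> int \<Rightarrow> nat \<Rightarrow> 'a set" where
  "prune_steps V E i t 0 = prune E V i"
| "prune_steps V E i t (Suc j) = prune E (prune_steps V E i t j) (i - int (Suc j) * t)"

end

theory Submission
  imports Defs
begin

text \<open>Write t = -(p+1). Every member G_r of a D-chain with r > 0 lies in the set of vertices
of G_{r-p-1} (index truncated at 0) having at least r neighbours there, so by induction on r
every D-chain lies termwise below the chain defined by this very recursion, and every
truncation of that chain to its nonempty part is itself a D-chain. Hence the maximal D-chain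
obeys the recursion. Round j of the procedure prunes G_{i+(j-1)(p+1)} at threshold
i+j(p+1), which is one step of the recursion, so its output is G_{i+m(p+1)} = G_k.\<close>

fun core_chain :: "'a set \<Rightarrow> ('a \<Rightarrow> 'a \<Rightarrow> bool) \<Rightarrow> nat \<Rightarrow> nat \<Rightarrow> 'a set" where
  "core_chain V E p 0 = V"
| "core_chain V E p (Suc n) = prune E (core_chain V E p (n - p)) (int (Suc n))"

lemma prune_subset: "prune E H d \<subseteq> H"
  unfolding prune_def by auto

lemma prune_mono:
  assumes "finite H'" "H \<subseteq> H'" "d' \<le> d"
  shows "prune E H d \<subseteq> prune E H' d'"
proof
  fix v assume v: "v \<in> prune E H d"
  have "card (nbrs E H v) \<le> card (nbrs E H' v)"
    using assms unfolding nbrs_def by (intro card_mono) auto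
  then show "v \<in> prune E H' d'" using v assms unfolding prune_def by auto
qed

lemma core_chain_subset: "core_chain V E p n \<subseteq> V"
proof (induction V E p n rule: core_chain.induct)
  case (2 V E p n)
  then show ?case using prune_subset[of E "core_chain V E p (n - p)"] by auto
qed simp

lemma core_chain_Suc_subset:
  assumes "finite V"
  shows "core_chain V E p (Suc n) \<subseteq> core_chain V E p n"
proof (induction n rule: less_induct)
  case (less n)
  show ?case
  proof (cases n)
    case 0
    then show ?thesis using prune_subset by simp
  next
    case (Suc n')
    have "core_chain V E p (n - p) \<subseteq> core_chain V E p (n' - p)"
      using less[of "n' - p"] Suc by (cases "p \<le> n'") (simp_all add: Suc_diff_le)
    then show ?thesis
      using Suc finite_subset[OF core_chain_subset assms]
      by (simp del: core_chain.simps(1)) (rule prune_mono, auto)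
  qed
qed

lemma core_chain_antimono:
  assumes "finite V" "a \<le> b"
  shows "core_chain V E p b \<subseteq> core_chain V E p a"
  using lift_Suc_antimono_le[of "core_chain V E p"] core_chain_Suc_subset[OF assms(1)] assms(2)
  by blast

lemma D_chain_antimono:
  assumes "D_chain V E t C L" "a \<le> b"
  shows "C b \<subseteq> C a"
proof -
  have "C (Suc n) \<subseteq> C n" for n
    using assms(1) unfolding D_chain_def by (cases "Suc n \<le> L") (force, simp)
  then show ?thesis using assms(2) by (rule lift_Suc_antimono_le)
qed

lemma nat_max_0_diff_Suc: "nat (max 0 (int r - int (Suc p))) = r - Suc p"
  by auto

lemma D_chain_subset_core_chain:
  assumes fin: "finite V" and ch: "D_chain V E (- int (Suc p)) C L"
  shows "C r \<subseteq> core_chain V E p r"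
proof (induction r rule: less_induct)
  case (less r)
  show ?case
  proof (cases r)
    case 0
    then show ?thesis using ch unfolding D_chain_def by simp
  next
    case (Suc n)
    show ?thesis
    proof (cases "r \<le> L")
      case False
      then show ?thesis using ch unfolding D_chain_def by simp
    next
      case True
      show ?thesis
      proof
        fix v assume v: "v \<in> C r"
        have below: "C (n - p) \<subseteq> core_chain V E p (n - p)"
          using less[of "n - p"] Suc by simp
        have "r \<le> card (nbrs E (C (n - p)) v)"
          using ch True v Suc nat_max_0_diff_Suc[of r p] unfolding D_chain_def by auto
        also have "\<dots> \<le> card (nbrs E (core_chain V E p (n - p)) v)"
          using below fin core_chain_subset[of V E p "n - p"]
          unfolding nbrs_def by (intro card_mono) (auto intro: finite_subset)
        finally have "r \<le> card (nbrs E (core_chain V E p (n - p)) v)" .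
        moreover have "v \<in> C (n - p)"
          using v D_chain_antimono[OF ch, of "n - p" r] Suc by fastforce
        ultimately show "v \<in> core_chain V E p r"
          using below Suc by (auto simp: prune_def)
      qed
    qed
  qed
qed

lemma D_chain_core_chain_truncation:
  assumes fin: "finite V" and ne: "core_chain V E p L \<noteq> {}"
  shows "D_chain V E (- int (Suc p)) (\<lambda>r. if r \<le> L then core_chain V E p r else {}) L"
  unfolding D_chain_def
proof (intro conjI allI impI ballI)
  fix r assume "r \<le> L"
  then show "(if r \<le> L then core_chain V E p r else {}) \<noteq> {}"
    using ne core_chain_antimono[OF fin, of r L E p] by auto
next
  fix r assume "1 \<le> r \<and> r \<le> L"
  then show "(if r \<le> L then core_chain V E p r else {})
      \<subseteq> (if r - 1 \<le> L then core_chain V E p (r - 1) else {})"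
    using core_chain_antimono[OF fin, of "r - 1" r E p] by auto
next
  fix r v assume r: "r \<le> L" and v: "v \<in> (if r \<le> L then core_chain V E p r else {})"
  show "r \<le> card (nbrs E (if nat (max 0 (int r + - int (Suc p))) \<le> L
      then core_chain V E p (nat (max 0 (int r + - int (Suc p)))) else {}) v)"
  proof (cases r)
    case (Suc n)
    then have "nat (max 0 (int r + - int (Suc p))) = n - p" by auto
    moreover have "v \<in> prune E (core_chain V E p (n - p)) (int r)"
      using v r Suc by simp
    ultimately show ?thesis using r Suc unfolding prune_def by auto
  qed simp
qed auto

lemma maximal_D_chain_eq_core_chain:
  assumes fin: "finite V" and max: "maximal_D_chain V E (- int (Suc p)) C len"
  shows "C r = core_chain V E p r"
proof -
  have ch: "D_chain V E (- int (Suc p)) C len" and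
    longest: "\<And>C' L. D_chain V E (- int (Suc p)) C' L \<Longrightarrow> L \<le> len" and
    no_larger: "\<not> (\<exists>C'. D_chain V E (- int (Suc p)) C' len
      \<and> (\<exists>r. 1 \<le> r \<and> r \<le> len \<and> C r \<subset> C' r))"
    using max unfolding maximal_D_chain_def by auto
  have below: "C r \<subseteq> core_chain V E p r" for r
    using D_chain_subset_core_chain[OF fin ch] .
  show ?thesis
  proof (cases "r \<le> len")
    case True
    have "core_chain V E p len \<noteq> {}"
      using ch below[of len] unfolding D_chain_def by blast
    note truncation = D_chain_core_chain_truncation[OF fin this]
    show ?thesis
    proof (cases r)
      case (Suc n)
      then show ?thesis using no_larger truncation True below[of r] by fastforce
    qed (use ch in \<open>simp add: D_chain_def\<close>)
  next
    case False
    have "core_chain V E p (Suc len) = {}"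
      using longest[OF D_chain_core_chain_truncation[OF fin]] by fastforce
    then have "core_chain V E p r = {}"
      using core_chain_antimono[OF fin, of "Suc len" r E p] False by auto
    moreover have "C r = {}" using ch False unfolding D_chain_def by simp
    ultimately show ?thesis by simp
  qed
qed

lemma prune_steps_eq_core_chain:
  assumes "1 \<le> i" "i \<le> int (Suc p)"
  shows "prune_steps V E i (- int (Suc p)) j = core_chain V E p (nat i + j * Suc p)"
proof -
  define n where "n = nat i - 1"
  have n: "i = int (Suc n)" "n \<le> p"
    using assms unfolding n_def by auto
  show ?thesis
  proof (induction j)
    case 0
    have "nat i = Suc n" using n by simp
    then show ?case using n by simp
  next
    case (Suc j)
    have "nat i + Suc j * Suc p = Suc (n + Suc j * Suc p)" using n by simp
    moreover have "n + Suc j * Suc p - p = nat i + j * Suc p" using n by simp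
    ultimately show ?case using Suc.IH n by (simp add: algebra_simps)
  qed
qed

theorem theorem1:
  fixes V :: "'a set" and E :: "'a \<Rightarrow> 'a \<Rightarrow> bool"
    and t i :: int and k m len :: nat and C :: "nat \<Rightarrow> 'a set"
  assumes "simple_graph V E"
    and "t < 0" and "k > 0"
    and "int k = i - int m * t" and "1 \<le> i" and "i \<le> - t"
    and "maximal_D_chain V E t C len"
  shows "prune_steps V E i t m = C k"
proof -
  have fin: "finite V" using assms(1) unfolding simple_graph_def by simp
  define p where "p = nat (- t) - 1"
  have t: "t = - int (Suc p)" using assms(2) unfolding p_def by simp
  have "int k = int (nat i + m * Suc p)" using assms(4,5) t by (simp add: algebra_simps)
  then have k: "k = nat i + m * Suc p" by (simp only: of_nat_eq_iff)
  have "prune_steps V E i t m = core_chain V E p k"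
    using prune_steps_eq_core_chain[of i p V E m] assms(5,6) t k by simp
  also have "\<dots> = C k"
    using maximal_D_chain_eq_core_chain[OF fin, of E p C len] assms(7) t by simp
  finally show ?thesis .
qed

end
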